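(* Let $\Lambda,\Theta$ be Young functions of class $C^2$, and set $i_\lambda:=\inf_{t>0}\frac{t\Lambda''(t)}{\Lambda'(t)}$, $s_\lambda:=\sup_{t>0}\frac{t\Lambda''(t)}{\Lambda'(t)}$, $i_\theta:=\inf_{t>0}\frac{t\Theta''(t)}{\Theta'(t)}$, $s_\theta:=\sup_{t>0}\frac{t\Theta''(t)}{\Theta'(t)}$. Suppose $0<i_\lambda\le s_\lambda\le i_\theta\le s_\theta<+\infty$. Then $\Upsilon:=\Theta\circ\Lambda^{-1}$ is convex. If, moreover, $s_\Lambda<i_\Theta$, then $\Upsilon$ is a Young function.
   Context: A Young function is a convex $\Lambda:[0,\infty)\to[0,\infty)$ with $\Lambda(t)=0$ iff $t=0$, $\lim_{t\to0^+}\Lambda(t)/t=0$ and $\lim_{t\to\infty}\Lambda(t)/t=\infty$. For a differentiable Young function $\Lambda$, $i_\Lambda:=\inf_{t>0}\frac{t\Lambda'(t)}{\Lambda(t)}$ and $s_\Lambda:=\sup_{t>0}\frac{t\Lambda'(t)}{\Lambda(t)}$. *)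

theory Defs
  imports "HOL-Analysis.Analysis"
begin

text \<open>Young function on [0,inf), represented as a real function whose behaviour
  outside [0,inf) is irrelevant.\<close>
definition young_function :: "(real \<Rightarrow> real) \<Rightarrow> bool" where
  "young_function f \<longleftrightarrow>
     convex_on {0..} f \<and>
     (\<forall>t\<ge>0. f t \<ge> 0) \<and>
     (\<forall>t\<ge>0. f t = 0 \<longleftrightarrow> t = 0) \<and>
     ((\<lambda>t. f t / t) \<longlongrightarrow> 0) (at_right 0) \<and>
     filterlim (\<lambda>t. f t / t) at_top at_top"

definition C2_on :: "real set \<Rightarrow> (real \<Rightarrow> real) \<Rightarrow> bool" where
  "C2_on S f \<longleftrightarrow>
     (\<forall>x\<in>S. f differentiable (at x)) \<and>
     (\<forall>x\<in>S. deriv f differentiable (at x)) \<and>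
     continuous_on S (deriv (deriv f))"

text \<open>Indices, as extended reals (so that the value +infinity is possible).\<close>
definition lower_index :: "(real \<Rightarrow> real) \<Rightarrow> ereal" where
  "lower_index f = (INF t\<in>{0<..}. ereal (t * deriv f t / f t))"

definition upper_index :: "(real \<Rightarrow> real) \<Rightarrow> ereal" where
  "upper_index f = (SUP t\<in>{0<..}. ereal (t * deriv f t / f t))"

text \<open>i_lambda, s_lambda: indices of the derivative.\<close>
definition lower_index2 :: "(real \<Rightarrow> real) \<Rightarrow> ereal" where
  "lower_index2 f = lower_index (deriv f)"

definition upper_index2 :: "(real \<Rightarrow> real) \<Rightarrow> ereal" where
  "upper_index2 f = upper_index (deriv f)"

end

theory Submission
  imports Defs "HOL-Real_Asymp.Real_Asymp"
begin

(* Since s_lambda <= i_theta, the logarithmic derivative of Lambda' is dominated by that of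
   Theta', so Theta'/Lambda' is nondecreasing. By the Cauchy mean value theorem the difference
   quotients of Upsilon = Theta o Lambda^-1 are values of Theta'/Lambda' at increasing points,
   hence Upsilon is convex. If s_Lambda < i_Theta, choose c > 0 in the gap: then
   Theta u / (Lambda u * u^c) is nondecreasing, so Theta/Lambda tends to 0 at 0 and to infinity
   at infinity; as Upsilon s / s = Theta u / Lambda u for u = Lambda^-1 s, these become the growth
   conditions of a Young function for Upsilon. *)

section \<open>Young functions and their inverses\<close>

lemma young_function_zero: "young_function f \<Longrightarrow> f 0 = 0"
  by (simp add: young_function_def)

lemma young_function_pos: "young_function f \<Longrightarrow> 0 < t \<Longrightarrow> 0 < f t"
  unfolding young_function_def by (metis less_eq_real_def less_irrefl)

lemma young_function_strict_mono_on:
  assumes "young_function f"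
  shows "strict_mono_on {0..} f"
proof (rule strict_mono_onI)
  fix x y :: real
  assume "x \<in> {0..}" "y \<in> {0..}" "x < y"
  then have t: "0 \<le> x / y" "x / y < 1" and y: "0 < y" by auto
  have "f ((1 - x / y) *\<^sub>R 0 + (x / y) *\<^sub>R y) \<le> (1 - x / y) * f 0 + (x / y) * f y"
    using assms t y by (intro convex_onD[of "{0..}"]) (auto simp: young_function_def)
  then have "f x \<le> (x / y) * f y"
    using y by (simp add: young_function_zero[OF assms])
  also have "\<dots> < 1 * f y"
    using t young_function_pos[OF assms y] by (intro mult_strict_right_mono) auto
  finally show "f x < f y" by simp
qed

lemma young_function_continuous_on:
  assumes "young_function f"
  shows "continuous_on {0..} f"
proof -
  have "convex_on {0<..} f"
    using assms by (auto simp: young_function_def intro: convex_on_subset)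
  then have "continuous_on {0<..} f"
    by (simp add: convex_on_continuous)
  then have pos: "isCont f x" if "0 < x" for x
    using that by (simp add: continuous_on_eq_continuous_at)
  have "((\<lambda>t. t * (f t / t)) \<longlongrightarrow> 0 * 0) (at_right 0)"
    using assms by (intro tendsto_mult tendsto_ident_at) (auto simp: young_function_def)
  moreover have "\<forall>\<^sub>F t in at_right 0. t * (f t / t) = f t"
    by (rule eventually_mono[OF eventually_at_right_less]) simp
  ultimately have "(f \<longlongrightarrow> f 0) (at_right 0)"
    using Lim_transform_eventually young_function_zero[OF assms] by fastforce
  then have zero: "continuous (at 0 within {0..}) f"
    by (simp add: continuous_within at_within_Ici_at_right)
  show ?thesis
    unfolding continuous_on_eq_continuous_within
  proof
    fix x :: real
    assume "x \<in> {0..}"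
    then consider "x = 0" | "0 < x" by fastforce
    then show "continuous (at x within {0..}) f"
      by cases (use zero pos continuous_at_imp_continuous_within in auto)
  qed
qed

lemma young_function_bij_betw:
  assumes "young_function f"
  shows "bij_betw f {0..} {0..}"
proof (rule bij_betw_imageI)
  show "inj_on f {0..}"
    using young_function_strict_mono_on[OF assms] by (rule strict_mono_on_imp_inj_on)
  show "f ` {0..} = {0..}"
  proof
    show "f ` {0..} \<subseteq> {0..}"
      using assms by (auto simp: young_function_def)
  next
    show "{0..} \<subseteq> f ` {0..}"
    proof
      fix s :: real
      assume "s \<in> {0..}"
      have "\<forall>\<^sub>F t in at_top. 1 \<le> f t / t"
        using assms by (simp add: young_function_def filterlim_at_top)
      then obtain N where N: "\<And>t. N \<le> t \<Longrightarrow> 1 \<le> f t / t"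
        by (auto simp: eventually_at_top_linorder)
      define t where "t = max N (max 1 s)"
      have t: "N \<le> t" "1 \<le> t" "s \<le> t"
        by (auto simp: t_def)
      then have "t \<le> f t"
        using N[of t] by (simp add: le_divide_eq)
      then have "f 0 \<le> s" "s \<le> f t" "0 \<le> t"
        using \<open>s \<in> {0..}\<close> t young_function_zero[OF assms] by auto
      moreover have "continuous_on {0..t} f"
        using young_function_continuous_on[OF assms] by (rule continuous_on_subset) auto
      ultimately obtain u where "0 \<le> u" "u \<le> t" "f u = s"
        using IVT'[of f 0 s t] by blast
      then show "s \<in> f ` {0..}"
        by force
    qed
  qed
qed

lemma young_function_inv_into:
  assumes "young_function f" "0 \<le> s"
  shows "0 \<le> inv_into {0..} f s" "f (inv_into {0..} f s) = s"
  using bij_betw_inv_into_right[OF young_function_bij_betw[OF assms(1)]]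
    bij_betw_inv_into[OF young_function_bij_betw[OF assms(1)]] assms(2)
  by (auto simp: bij_betw_def)

lemma young_function_inv_into_less_iff:
  assumes "young_function f" "0 \<le> s" "0 \<le> u"
  shows "inv_into {0..} f s < u \<longleftrightarrow> s < f u"
  using strict_mono_on_less[OF young_function_strict_mono_on[OF assms(1)]]
    young_function_inv_into[OF assms(1,2)] assms(3)
  by (metis atLeast_iff)

lemma young_function_inv_into_pos:
  assumes "young_function f" "0 < s"
  shows "0 < inv_into {0..} f s"
  using young_function_inv_into[OF assms(1) less_imp_le[OF assms(2)]]
    young_function_zero[OF assms(1)] assms(2)
  by (metis less_eq_real_def less_irrefl)

lemma young_function_inv_into_at_right_0:
  assumes "young_function f"
  shows "filterlim (inv_into {0..} f) (at_right 0) (at_right 0)"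
proof (rule tendsto_imp_filterlim_at_right)
  show pos: "\<forall>\<^sub>F s in at_right 0. 0 < inv_into {0..} f s"
    using eventually_at_right_less
    by (rule eventually_mono) (rule young_function_inv_into_pos[OF assms])
  show "(inv_into {0..} f \<longlongrightarrow> 0) (at_right 0)"
  proof (rule order_tendstoI)
    fix a :: real
    assume "a < 0"
    with pos show "\<forall>\<^sub>F s in at_right 0. a < inv_into {0..} f s"
      by (auto elim: eventually_mono)
  next
    fix e :: real
    assume "0 < e"
    then have "\<forall>\<^sub>F s in at_right 0. s \<in> {0<..<f e}"
      using young_function_pos[OF assms] by (intro eventually_at_right_real)
    then show "\<forall>\<^sub>F s in at_right 0. inv_into {0..} f s < e"
      by (rule eventually_mono) (use young_function_inv_into_less_iff[OF assms] \<open>0 < e\<close> in auto)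
  qed
qed

lemma young_function_inv_into_at_top:
  assumes "young_function f"
  shows "filterlim (inv_into {0..} f) at_top at_top"
  unfolding filterlim_at_top eventually_at_top_linorder
proof
  fix z :: real
  show "\<exists>N. \<forall>s\<ge>N. z \<le> inv_into {0..} f s"
  proof (intro exI allI impI)
    fix s
    assume s: "f (max z 0) \<le> s"
    moreover have "0 \<le> f (max z 0)"
      using assms by (simp add: young_function_def)
    ultimately show "z \<le> inv_into {0..} f s"
      using young_function_inv_into_less_iff[OF assms, of s "max z 0"] by auto
  qed
qed

lemma young_function_comp_inv_into:
  assumes f: "young_function f" and g: "young_function g"
    and convex: "convex_on {0..} (g \<circ> inv_into {0..} f)"
    and zero: "((\<lambda>t. g t / f t) \<longlongrightarrow> 0) (at_right 0)"
    and infinity: "filterlim (\<lambda>t. g t / f t) at_top at_top"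
  shows "young_function (g \<circ> inv_into {0..} f)"
proof -
  let ?I = "inv_into {0..} f"
  have quotient: "(g \<circ> ?I) s / s = g (?I s) / f (?I s)" if "0 < s" for s
    using that young_function_inv_into[OF f] by simp
  have "((\<lambda>s. g (?I s) / f (?I s)) \<longlongrightarrow> 0) (at_right 0)"
    using filterlim_compose[OF zero young_function_inv_into_at_right_0[OF f]] by simp
  moreover have "\<forall>\<^sub>F s in at_right 0. g (?I s) / f (?I s) = (g \<circ> ?I) s / s"
    using eventually_at_right_less by (rule eventually_mono) (rule quotient[symmetric])
  ultimately have lim_zero: "((\<lambda>s. (g \<circ> ?I) s / s) \<longlongrightarrow> 0) (at_right 0)"
    by (rule Lim_transform_eventually)
  have "filterlim (\<lambda>s. g (?I s) / f (?I s)) at_top at_top"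
    using filterlim_compose[OF infinity young_function_inv_into_at_top[OF f]] by simp
  moreover have "\<forall>\<^sub>F s in at_top. g (?I s) / f (?I s) = (g \<circ> ?I) s / s"
    using eventually_gt_at_top[of 0] by (rule eventually_mono) (rule quotient[symmetric])
  ultimately have lim_infinity: "filterlim (\<lambda>s. (g \<circ> ?I) s / s) at_top at_top"
    by (rule filterlim_mono_eventually[OF _ order_refl order_refl])
  have "0 \<le> (g \<circ> ?I) s" and "(g \<circ> ?I) s = 0 \<longleftrightarrow> s = 0" if "0 \<le> s" for s
    using that f g young_function_inv_into[OF f that] young_function_inv_into_pos[OF f, of s]
    by (auto simp: young_function_def young_function_zero[OF f])
  then show ?thesis
    using convex lim_zero lim_infinity by (simp add: young_function_def)
qed

section \<open>Convexity of a Young function composed with an inverse\<close>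

lemma young_function_has_real_derivative_pos:
  assumes f: "young_function f" and x: "0 < x" and D: "(f has_real_derivative D) (at x)"
  shows "0 < D"
proof -
  have "f 0 - f x \<ge> D * (0 - x)"
  proof (rule convex_on_imp_above_tangent)
    show "convex_on {0..} f"
      using f by (simp add: young_function_def)
    show "(f has_real_derivative D) (at x within {0..})"
      using D by (rule has_field_derivative_at_within)
  qed (use x in \<open>auto simp: is_interval_connected\<close>)
  then have "f x \<le> D * x"
    by (simp add: young_function_zero[OF f])
  with young_function_pos[OF f x] have "0 < D * x"
    by linarith
  then show ?thesis
    using x by (rule zero_less_mult_pos2)
qed

lemma cauchy_mean_value_theorem:
  fixes f g :: "real \<Rightarrow> real"
  assumes "a < b" and "continuous_on {a..b} f" "continuous_on {a..b} g"
    and f': "\<And>x. a < x \<Longrightarrow> x < b \<Longrightarrow> (f has_real_derivative f' x) (at x)"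
    and g': "\<And>x. a < x \<Longrightarrow> x < b \<Longrightarrow> (g has_real_derivative g' x) (at x)"
  shows "\<exists>\<xi>. a < \<xi> \<and> \<xi> < b \<and> (f b - f a) * g' \<xi> = (g b - g a) * f' \<xi>"
proof -
  define h where "h x = (f b - f a) * g x - (g b - g a) * f x" for x
  have h': "(h has_real_derivative (f b - f a) * g' x - (g b - g a) * f' x) (at x)"
    if "a < x" "x < b" for x
    unfolding h_def using that by (auto intro!: derivative_eq_intros f' g')
  have "continuous_on {a..b} h"
    unfolding h_def using assms(2,3) by (intro continuous_intros)
  then obtain l \<xi> where
      \<xi>: "a < \<xi>" "\<xi> < b" "(h has_real_derivative l) (at \<xi>)" "h b - h a = (b - a) * l"
    using MVT[OF \<open>a < b\<close>] h' real_differentiable_def by meson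
  have "h b - h a = 0"
    by (simp add: h_def algebra_simps)
  with \<xi>(4) \<open>a < b\<close> have "l = 0"
    by simp
  with \<xi> h' have "(f b - f a) * g' \<xi> - (g b - g a) * f' \<xi> = 0"
    using DERIV_unique by blast
  with \<xi> show ?thesis
    by auto
qed

lemma convex_on_slope_leI:
  fixes h :: "real \<Rightarrow> real"
  assumes "convex A"
    and slope: "\<And>x s y. x \<in> A \<Longrightarrow> y \<in> A \<Longrightarrow> x < s \<Longrightarrow> s < y \<Longrightarrow>
      (h s - h x) / (s - x) \<le> (h y - h s) / (y - s)"
  shows "convex_on A h"
proof (rule convex_on_linorderI[OF _ \<open>convex A\<close>])
  fix t x y :: real
  assume t: "0 < t" "t < 1" and xy: "x \<in> A" "y \<in> A" "x < y"
  define z where "z = (1 - t) * x + t * y"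
  have zx: "z - x = t * (y - x)" and yz: "y - z = (1 - t) * (y - x)"
    by (simp_all add: z_def algebra_simps)
  have "0 < t * (y - x)" "0 < (1 - t) * (y - x)"
    using t xy by simp_all
  then have "x < z" "z < y"
    unfolding zx[symmetric] yz[symmetric] by simp_all
  then have "(h z - h x) / (z - x) \<le> (h y - h z) / (y - z)"
    by (rule slope[OF xy(1,2)])
  with \<open>x < z\<close> \<open>z < y\<close> have "(y - z) * (h z - h x) \<le> (z - x) * (h y - h z)"
    by (simp add: field_simps)
  then have "(y - x) * ((1 - t) * (h z - h x)) \<le> (y - x) * (t * (h y - h z))"
    by (simp add: zx yz ac_simps)
  then have "(1 - t) * (h z - h x) \<le> t * (h y - h z)"
    using xy by simp
  then show "h ((1 - t) *\<^sub>R x + t *\<^sub>R y) \<le> (1 - t) * h x + t * h y"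
    by (simp add: z_def algebra_simps)
qed

lemma convex_on_comp_inv_into_if_mono_on:
  assumes f: "young_function f" and g: "continuous_on {0..} g"
    and f': "\<And>t. 0 < t \<Longrightarrow> (f has_real_derivative f' t) (at t)"
    and g': "\<And>t. 0 < t \<Longrightarrow> (g has_real_derivative g' t) (at t)"
    and mono: "mono_on {0<..} (\<lambda>t. g' t / f' t)"
  shows "convex_on {0..} (g \<circ> inv_into {0..} f)"
proof (rule convex_on_slope_leI)
  let ?I = "inv_into {0..} f"
  have slope: "\<exists>\<xi>. u < \<xi> \<and> \<xi> < v \<and> (g v - g u) / (f v - f u) = g' \<xi> / f' \<xi>"
    if "0 \<le> u" "u < v" for u v
  proof -
    have "continuous_on {u..v} f" "continuous_on {u..v} g"
      using that young_function_continuous_on[OF f] g by (auto elim: continuous_on_subset)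
    then have "\<exists>\<xi>. u < \<xi> \<and> \<xi> < v \<and> (f v - f u) * g' \<xi> = (g v - g u) * f' \<xi>"
      by (rule cauchy_mean_value_theorem[OF \<open>u < v\<close>]) (use that in \<open>auto intro: f' g'\<close>)
    then obtain \<xi> where \<xi>: "u < \<xi>" "\<xi> < v" "(f v - f u) * g' \<xi> = (g v - g u) * f' \<xi>"
      by blast
    moreover have "0 < f' \<xi>"
      using \<xi> that by (intro young_function_has_real_derivative_pos[OF f _ f']) auto
    moreover have "0 < f v - f u"
      using young_function_strict_mono_on[OF f] that by (simp add: strict_mono_on_def)
    ultimately show ?thesis
      by (intro exI[of _ \<xi>]) (auto simp: field_simps)
  qed
  fix x s y :: real
  assume "x \<in> {0..}" "y \<in> {0..}" "x < s" "s < y"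
  then have nonneg: "0 \<le> x" "0 \<le> s" "0 \<le> y"
    by auto
  note inv = young_function_inv_into[OF f nonneg(1)] young_function_inv_into[OF f nonneg(2)]
    young_function_inv_into[OF f nonneg(3)]
  have "?I x < ?I s" "?I s < ?I y"
    using young_function_inv_into_less_iff[OF f nonneg(1) inv(3)]
      young_function_inv_into_less_iff[OF f nonneg(2) inv(5)] inv \<open>x < s\<close> \<open>s < y\<close>
    by simp_all
  then obtain \<xi> \<eta> where
      \<xi>: "?I x < \<xi>" "\<xi> < ?I s" "(g (?I s) - g (?I x)) / (f (?I s) - f (?I x)) = g' \<xi> / f' \<xi>" and
      \<eta>: "?I s < \<eta>" "\<eta> < ?I y" "(g (?I y) - g (?I s)) / (f (?I y) - f (?I s)) = g' \<eta> / f' \<eta>"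
    using slope[OF inv(1)] slope[OF inv(3)] by meson
  have "g' \<xi> / f' \<xi> \<le> g' \<eta> / f' \<eta>"
    using \<xi> \<eta> inv by (intro mono_onD[OF mono]) auto
  then show "((g \<circ> ?I) s - (g \<circ> ?I) x) / (s - x) \<le> ((g \<circ> ?I) y - (g \<circ> ?I) s) / (y - s)"
    using \<xi>(3) \<eta>(3) by (simp only: comp_apply inv(2,4,6))
qed simp

section \<open>Logarithmic derivatives and indices\<close>

lemma mono_on_divide_if_log_deriv_le:
  assumes F: "\<And>t. 0 < t \<Longrightarrow> (F has_real_derivative F' t) (at t)" "\<And>t. 0 < t \<Longrightarrow> 0 < F t"
    and G: "\<And>t. 0 < t \<Longrightarrow> (G has_real_derivative G' t) (at t)" "\<And>t. 0 < t \<Longrightarrow> 0 < G t"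
    and le: "\<And>t. 0 < t \<Longrightarrow> F' t / F t \<le> G' t / G t"
  shows "mono_on {0<..} (\<lambda>t. G t / F t)"
proof (rule mono_onI)
  have D: "((\<lambda>t. G t / F t) has_real_derivative (G' t * F t - G t * F' t) / (F t * F t)) (at t)"
    if "0 < t" for t
    using F(2)[OF that] by (intro DERIV_divide F(1) G(1) that) simp
  have D_nonneg: "0 \<le> (G' t * F t - G t * F' t) / (F t * F t)" if "0 < t" for t
  proof -
    have "G t * F' t \<le> G' t * F t"
      using le[OF that] F(2)[OF that] G(2)[OF that] by (simp add: field_simps)
    then show ?thesis
      by simp
  qed
  fix x y :: real
  assume "x \<in> {0<..}" "y \<in> {0<..}" "x \<le> y"
  show "G x / F x \<le> G y / F y"
  proof (rule DERIV_nonneg_imp_increasing_open[OF \<open>x \<le> y\<close>])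
    fix t
    assume "x < t" "t < y"
    with \<open>x \<in> {0<..}\<close> have "0 < t"
      by simp
    then show "\<exists>d. ((\<lambda>t. G t / F t) has_real_derivative d) (at t) \<and> 0 \<le> d"
      using D[OF \<open>0 < t\<close>] D_nonneg[OF \<open>0 < t\<close>] by blast
  next
    show "continuous_on {x..y} (\<lambda>t. G t / F t)"
      using \<open>x \<in> {0<..}\<close>
      by (intro DERIV_continuous_on) (rule has_field_derivative_at_within, rule D, simp)
  qed
qed

lemma divide_powr_bounds_if_log_deriv_gap:
  fixes F G F' G' :: "real \<Rightarrow> real"
  assumes F: "\<And>t. 0 < t \<Longrightarrow> (F has_real_derivative F' t) (at t)" "\<And>t. 0 < t \<Longrightarrow> 0 < F t"
    and G: "\<And>t. 0 < t \<Longrightarrow> (G has_real_derivative G' t) (at t)" "\<And>t. 0 < t \<Longrightarrow> 0 < G t"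
    and gap: "\<And>t. 0 < t \<Longrightarrow> F' t / F t + c / t \<le> G' t / G t"
  shows "\<And>t. 0 < t \<Longrightarrow> t \<le> 1 \<Longrightarrow> G t / F t \<le> G 1 / F 1 * t powr c"
    and "\<And>t. 1 \<le> t \<Longrightarrow> G 1 / F 1 * t powr c \<le> G t / F t"
proof -
  define H where "H t = F t * t powr c" for t
  define H' where "H' t = F' t * t powr c + F t * (c * t powr (c - 1))" for t
  have H: "(H has_real_derivative H' t) (at t)" "0 < H t" if "0 < t" for t
    unfolding H_def H'_def using that F(1,2)[OF that]
    by (auto intro!: derivative_eq_intros)
  have "H' t / H t = F' t / F t + c / t" if "0 < t" for t
    using that F(2)[OF that] by (simp add: H_def H'_def powr_diff field_simps)
  then have mono: "mono_on {0<..} (\<lambda>t. G t / H t)"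
    using gap by (intro mono_on_divide_if_log_deriv_le[OF H G]) auto
  have eq: "G t / F t = G t / H t * t powr c" if "0 < t" for t
    using that by (simp add: H_def)
  have H1: "H 1 = F 1"
    by (simp add: H_def)
  show "G t / F t \<le> G 1 / F 1 * t powr c" if "0 < t" "t \<le> 1" for t
    unfolding eq[OF \<open>0 < t\<close>] H1[symmetric]
    by (rule mult_right_mono) (use mono_onD[OF mono, of t 1] that in auto)
  show "G 1 / F 1 * t powr c \<le> G t / F t" if "1 \<le> t" for t
  proof -
    have "0 < t"
      using that by simp
    show ?thesis
      unfolding eq[OF \<open>0 < t\<close>] H1[symmetric]
      by (rule mult_right_mono) (use mono_onD[OF mono, of 1 t] that in auto)
  qed
qed

lemma divide_tendsto_if_log_deriv_gap:
  fixes F G F' G' :: "real \<Rightarrow> real"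
  assumes F: "\<And>t. 0 < t \<Longrightarrow> (F has_real_derivative F' t) (at t)" "\<And>t. 0 < t \<Longrightarrow> 0 < F t"
    and G: "\<And>t. 0 < t \<Longrightarrow> (G has_real_derivative G' t) (at t)" "\<And>t. 0 < t \<Longrightarrow> 0 < G t"
    and "0 < c" and gap: "\<And>t. 0 < t \<Longrightarrow> F' t / F t + c / t \<le> G' t / G t"
  shows "((\<lambda>t. G t / F t) \<longlongrightarrow> 0) (at_right 0)"
    and "filterlim (\<lambda>t. G t / F t) at_top at_top"
proof -
  define K where "K = G 1 / F 1"
  have "0 < K"
    using F(2) G(2) by (simp add: K_def)
  note bounds = divide_powr_bounds_if_log_deriv_gap[OF F G gap, folded K_def]
  show "((\<lambda>t. G t / F t) \<longlongrightarrow> 0) (at_right 0)"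
  proof (rule tendsto_sandwich)
    have "\<forall>\<^sub>F t in at_right (0::real). t \<in> {0<..<1}"
      by (rule eventually_at_right_real) simp
    then show "\<forall>\<^sub>F t in at_right 0. 0 \<le> G t / F t" "\<forall>\<^sub>F t in at_right 0. G t / F t \<le> K * t powr c"
      by (auto elim!: eventually_mono intro: less_imp_le[OF divide_pos_pos[OF G(2) F(2)]] bounds(1))
    show "((\<lambda>t. K * t powr c) \<longlongrightarrow> 0) (at_right 0)"
      using \<open>0 < c\<close> by real_asymp
  qed simp
  show "filterlim (\<lambda>t. G t / F t) at_top at_top"
  proof (rule filterlim_at_top_mono)
    show "filterlim (\<lambda>t. K * t powr c) at_top at_top"
      using \<open>0 < c\<close> \<open>0 < K\<close> by real_asymp
    show "\<forall>\<^sub>F t in at_top. K * t powr c \<le> G t / F t"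
      using eventually_ge_at_top[of 1] by (rule eventually_mono) (rule bounds(2))
  qed
qed

lemma le_upper_index: "0 < t \<Longrightarrow> ereal (t * deriv f t / f t) \<le> upper_index f"
  unfolding upper_index_def by (rule SUP_upper) simp

lemma lower_index_le: "0 < t \<Longrightarrow> lower_index f \<le> ereal (t * deriv f t / f t)"
  unfolding lower_index_def by (rule INF_lower) simp

lemma log_deriv_le_if_upper_index_le_lower_index:
  assumes "upper_index f \<le> lower_index g" and t: "0 < t"
  shows "deriv f t / f t \<le> deriv g t / g t"
proof -
  have "ereal (t * deriv f t / f t) \<le> ereal (t * deriv g t / g t)"
    using le_upper_index[OF t, of f] assms(1) lower_index_le[OF t, of g]
    by (rule order_trans[OF order_trans])
  then have "t * (deriv f t / f t) \<le> t * (deriv g t / g t)"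
    by (simp only: times_divide_eq_right ereal_less_eq(3))
  then show ?thesis
    using t by (rule mult_left_le_imp_le)
qed

lemma log_deriv_gap_if_upper_index_less_lower_index:
  assumes "upper_index f < lower_index g"
  obtains c where "0 < c" "\<And>t. 0 < t \<Longrightarrow> deriv f t / f t + c / t \<le> deriv g t / g t"
proof -
  obtain r1 where r1: "upper_index f < ereal r1" "ereal r1 < lower_index g"
    using ereal_dense2[OF assms] by blast
  obtain r2 where r2: "ereal r1 < ereal r2" "ereal r2 < lower_index g"
    using ereal_dense2[OF r1(2)] by blast
  show thesis
  proof (rule that[of "r2 - r1"])
    show "0 < r2 - r1"
      using r2(1) by simp
    fix t :: real
    assume t: "0 < t"
    have "ereal (t * deriv f t / f t) < ereal r1"
      using le_upper_index[OF t, of f] r1(1) by (rule le_less_trans)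
    moreover have "ereal r2 < ereal (t * deriv g t / g t)"
      using r2(2) lower_index_le[OF t, of g] by (rule less_le_trans)
    ultimately have "t * (deriv f t / f t) + (r2 - r1) \<le> t * (deriv g t / g t)"
      by simp
    with t show "deriv f t / f t + (r2 - r1) / t \<le> deriv g t / g t"
      by (simp add: field_simps)
  qed
qed

theorem proposition2p11:
  fixes \<Lambda> \<Theta> :: "real \<Rightarrow> real"
  assumes "young_function \<Lambda>" and "young_function \<Theta>"
    and "C2_on {0<..} \<Lambda>" and "C2_on {0<..} \<Theta>"
    and "0 < lower_index2 \<Lambda>"
    and "lower_index2 \<Lambda> \<le> upper_index2 \<Lambda>"
    and "upper_index2 \<Lambda> \<le> lower_index2 \<Theta>"
    and "lower_index2 \<Theta> \<le> upper_index2 \<Theta>"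
    and "upper_index2 \<Theta> < \<infinity>"
  shows "convex_on {0..} (\<Theta> \<circ> inv_into {0..} \<Lambda>) \<and>
         (upper_index \<Lambda> < lower_index \<Theta> \<longrightarrow>
           young_function (\<Theta> \<circ> inv_into {0..} \<Lambda>))"
proof -
  have \<Lambda>': "(\<Lambda> has_real_derivative deriv \<Lambda> t) (at t)"
    and \<Lambda>'': "(deriv \<Lambda> has_real_derivative deriv (deriv \<Lambda>) t) (at t)"
    and \<Theta>': "(\<Theta> has_real_derivative deriv \<Theta> t) (at t)"
    and \<Theta>'': "(deriv \<Theta> has_real_derivative deriv (deriv \<Theta>) t) (at t)" if "0 < t" for t
    using assms(3,4) that by (auto simp: C2_on_def DERIV_deriv_iff_real_differentiable)
  have \<Lambda>'_pos: "0 < deriv \<Lambda> t" and \<Theta>'_pos: "0 < deriv \<Theta> t" if "0 < t" for t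
    using that assms(1,2) \<Lambda>' \<Theta>' by (blast intro: young_function_has_real_derivative_pos)+
  \<comment> \<open>Of the index hypotheses only this one, s_lambda <= i_theta, is needed.\<close>
  have "mono_on {0<..} (\<lambda>t. deriv \<Theta> t / deriv \<Lambda> t)"
    using assms(7) unfolding upper_index2_def lower_index2_def
    by (intro mono_on_divide_if_log_deriv_le[OF \<Lambda>'' \<Lambda>'_pos \<Theta>'' \<Theta>'_pos]
        log_deriv_le_if_upper_index_le_lower_index)
  then have "convex_on {0..} (\<Theta> \<circ> inv_into {0..} \<Lambda>)"
    using \<Lambda>' \<Theta>' young_function_continuous_on[OF assms(2)]
    by (intro convex_on_comp_inv_into_if_mono_on[OF assms(1)])
  moreover have "young_function (\<Theta> \<circ> inv_into {0..} \<Lambda>)"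
    if index_gap: "upper_index \<Lambda> < lower_index \<Theta>"
  proof -
    obtain c where "0 < c" "\<And>t. 0 < t \<Longrightarrow> deriv \<Lambda> t / \<Lambda> t + c / t \<le> deriv \<Theta> t / \<Theta> t"
      using log_deriv_gap_if_upper_index_less_lower_index[OF index_gap] by blast
    then have "((\<lambda>t. \<Theta> t / \<Lambda> t) \<longlongrightarrow> 0) (at_right 0)"
      and "filterlim (\<lambda>t. \<Theta> t / \<Lambda> t) at_top at_top"
      using \<Lambda>' \<Theta>' young_function_pos[OF assms(1)] young_function_pos[OF assms(2)]
      by (intro divide_tendsto_if_log_deriv_gap; blast)+
    with assms(1,2) \<open>convex_on _ _\<close> show ?thesis
      by (rule young_function_comp_inv_into)
  qed
  ultimately show ?thesis
    by blast
qed

end
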